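(* Let $\Omega$ be a topological space and $\mathsf{F}:\mathcal{B}(\Omega)\to\mathcal{L}(\mathcal{H})$ a sharp observable (projection valued measure). If $\mathsf{F}$ and $\mathsf{E}_{\mathrm{can}}$ are jointly measurable, then $\mathsf{F}$ is trivial: for every $X\in\mathcal{B}(\Omega)$, $\mathsf{F}(X)=c_XI$ with $c_X\in\{0,1\}$.
   Context: $\mathcal{H}\simeq L^2(\mathbb{R})$ with number basis $\{|n\rangle\}_{n\in\mathbb{N}}$. An observable is a normalized POVM on a Borel $\sigma$-algebra. The canonical phase observable is $\mathsf{E}_{\mathrm{can}}(\Theta)=\sum_{m,n=0}^\infty \frac{1}{2\pi}\int_\Theta e^{i(m-n)\theta}\,d\theta\,|m\rangle\langle n|$, $\Theta\in\mathcal{B}([0,2\pi))$. Observables $\mathsf{E}_1:\mathcal{B}(\Omega_1)\to\mathcal{L}(\mathcal{H})$ and $\mathsf{E}_2:\mathcal{B}(\Omega_2)\to\mathcal{L}(\mathcal{H})$ are jointly measurable if there is an observable $\mathsf{E}:\mathcal{B}(\Omega_1\times\Omega_2)\to\mathcal{L}(\mathcal{H})$ with $\mathsf{E}(X\times\Omega_2)=\mathsf{E}_1(X)$ and $\mathsf{E}(\Omega_1\times Y)=\mathsf{E}_2(Y)$ for all $X\in\mathcal{B}(\Omega_1)$, $Y\in\mathcal{B}(\Omega_2)$. *)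

theory Defs
  imports "HOL-Analysis.Analysis"
begin

text \<open>Operators on H = L^2(R), identified with l^2(N) via the number basis |n>,
  are represented by their matrix elements  A m n = <m|A|n>.\<close>

type_synonym opmat = "nat \<Rightarrow> nat \<Rightarrow> complex"

definition idop :: opmat where
  "idop = (\<lambda>m n. if m = n then 1 else 0)"

definition scalar_op :: "complex \<Rightarrow> opmat" where
  "scalar_op c = (\<lambda>m n. if m = n then c else 0)"

definition qform :: "opmat \<Rightarrow> nat \<Rightarrow> (nat \<Rightarrow> complex) \<Rightarrow> complex" where
  "qform A N c = (\<Sum>m<N. \<Sum>n<N. cnj (c m) * A m n * c n)"

text \<open>Effect: a (bounded) operator with 0 <= A <= I, tested on the dense set of
  finitely supported vectors.\<close>
definition effect :: "opmat \<Rightarrow> bool" where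
  "effect A \<longleftrightarrow> (\<forall>N c. Im (qform A N c) = 0 \<and> 0 \<le> Re (qform A N c)
                          \<and> Re (qform A N c) \<le> (\<Sum>n<N. (cmod (c n))\<^sup>2))"

text \<open>Normalized POVM on the measurable space M (sigma-additive in the weak
  operator topology, i.e. matrix-elementwise, which is equivalent for effects).\<close>
definition observable :: "'a measure \<Rightarrow> ('a set \<Rightarrow> opmat) \<Rightarrow> bool" where
  "observable M E \<longleftrightarrow>
     (\<forall>X\<in>sets M. effect (E X)) \<and>
     E (space M) = idop \<and>
     (\<forall>F::nat \<Rightarrow> 'a set. range F \<subseteq> sets M \<longrightarrow> disjoint_family F \<longrightarrow>
        (\<forall>m n. (\<lambda>i. E (F i) m n) sums E (\<Union>i. F i) m n))"

text \<open>Sharp observable: every E(X) is a projection (idempotent; matrix product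
  sum_k A m k * A k n).\<close>
definition sharp :: "'a measure \<Rightarrow> ('a set \<Rightarrow> opmat) \<Rightarrow> bool" where
  "sharp M E \<longleftrightarrow> observable M E \<and>
     (\<forall>X\<in>sets M. \<forall>m n. (\<lambda>k. E X m k * E X k n) sums E X m n)"

definition phase_space :: "real measure" where
  "phase_space = restrict_space borel {0..<2*pi}"

definition E_can :: "real set \<Rightarrow> opmat" where
  "E_can X = (\<lambda>m n. complex_of_real (1 / (2*pi)) *
      (LINT \<theta>:X|lborel. exp (\<i> * of_int (int m - int n) * complex_of_real \<theta>)))"

definition jointly_measurable ::
  "'a::topological_space set \<Rightarrow> ('a set \<Rightarrow> opmat) \<Rightarrow>
   'b::topological_space set \<Rightarrow> ('b set \<Rightarrow> opmat) \<Rightarrow> bool" where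
  "jointly_measurable S1 E1 S2 E2 \<longleftrightarrow>
     (\<exists>E. observable (restrict_space borel (S1 \<times> S2)) E \<and>
        (\<forall>X\<in>sets (restrict_space borel S1). E (X \<times> S2) = E1 X) \<and>
        (\<forall>Y\<in>sets (restrict_space borel S2). E (S1 \<times> Y) = E2 Y))"

end

theory Submission
  imports Defs
begin

text \<open>Let G be a joint observable and Y a Borel set of outcomes of F. The slice
  X \<mapsto> G ((X \<inter> [0, 2\<pi>)) \<times> Y) is an effect-valued measure on the line lying below the canonical
  phase observable, whose 2 \<times> 2 blocks at indices m, n have the rank-one density
  (1 / 2\<pi>) [1, w; cnj w, 1] with w = exp (i (m - n) \<theta>).
  A positive form below a rank-one form is a multiple of it, so almost everywhere on [0, 2\<pi>) the
  slice has the matrix densities a(\<theta>) exp (i (m - n) \<theta>) with one scalar function a. Hence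
  F Y = G ([0, 2\<pi>) \<times> Y) is a Toeplitz matrix. The rows of a Hermitian idempotent Toeplitz
  matrix all have the same norm, which forces its first column, and then every off-diagonal entry,
  to vanish; so F Y is 0 or I.\<close>

section \<open>Densities of set functions\<close>

lemma sums_const_imp_zero:
  fixes c :: "'a::real_normed_vector"
  assumes "(\<lambda>i::nat. c) sums c"
  shows "c = 0"
  using LIMSEQ_unique[OF summable_LIMSEQ_zero[OF sums_summable[OF assms]] tendsto_const] by simp

lemma countably_additive_has_density:
  fixes \<phi> :: "'a set \<Rightarrow> real"
  assumes M: "sigma_finite_measure M"
    and nonneg: "\<And>X. X \<in> sets M \<Longrightarrow> 0 \<le> \<phi> X"
    and additive: "\<And>A. range A \<subseteq> sets M \<Longrightarrow> disjoint_family A \<Longrightarrow> (\<lambda>i. \<phi> (A i)) sums \<phi> (\<Union>i. A i)"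
    and null: "\<And>X. X \<in> null_sets M \<Longrightarrow> \<phi> X = 0"
  obtains g where "g \<in> borel_measurable M" "\<And>x. 0 \<le> g x" "integrable M g"
    "\<And>X. X \<in> sets M \<Longrightarrow> (LINT x:X|M. g x) = \<phi> X"
proof -
  have "\<phi> {} = 0"
    using additive[of "\<lambda>_. {}"] by (intro sums_const_imp_zero) (auto simp: disjoint_family_on_def)
  then have pos: "positive (sets M) (\<lambda>X. ennreal (\<phi> X))"
    by (simp add: positive_def)
  have ca: "countably_additive (sets M) (\<lambda>X. ennreal (\<phi> X))"
    unfolding countably_additive_def using additive nonneg by (intro allI impI suminf_ennreal_eq) auto
  define N where "N = measure_of (space M) (sets M) (\<lambda>X. ennreal (\<phi> X))"
  have sets_N: "sets N = sets M" and space_N: "space N = space M"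
    by (simp_all add: N_def)
  have emeasure_N: "emeasure N X = ennreal (\<phi> X)" if "X \<in> sets M" for X
    unfolding N_def using emeasure_measure_of_sigma[OF sets.sigma_algebra_axioms pos ca that] .
  interpret N: finite_measure N
    by (rule finite_measureI) (simp add: space_N emeasure_N)
  have ac: "absolutely_continuous M N"
    unfolding absolutely_continuous_def using null emeasure_N sets_N by (auto simp: null_sets_def)
  define g where "g x = enn2real (RN_deriv M N x)" for x
  note RN = sigma_finite_measure.RN_deriv_integrable[OF M N.sigma_finite_measure_axioms ac sets_N]
    sigma_finite_measure.RN_deriv_integral[OF M N.sigma_finite_measure_axioms ac sets_N]
  show ?thesis
  proof
    show "g \<in> borel_measurable M" "\<And>x. 0 \<le> g x" unfolding g_def by auto
    show "integrable M g"
      using RN(1)[of "\<lambda>_. 1::real"] by (simp add: g_def[abs_def])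
    fix X assume X: "X \<in> sets M"
    have "(LINT x:X|M. g x) = integral\<^sup>L N (indicator X :: 'a \<Rightarrow> real)"
      using RN(2)[of "indicator X :: 'a \<Rightarrow> real"] X
      by (simp add: g_def set_lebesgue_integral_def mult.commute)
    also have "\<dots> = \<phi> X"
      using X nonneg emeasure_N sets_N by (simp add: N.emeasure_finite measure_def)
    finally show "(LINT x:X|M. g x) = \<phi> X" .
  qed
qed

lemma integrable_imp_set_integrable:
  fixes f :: "'a \<Rightarrow> 'b::{banach, second_countable_topology}"
  shows "integrable M f \<Longrightarrow> A \<in> sets M \<Longrightarrow> set_integrable M A f"
  by (simp add: set_integrable_def integrable_mult_indicator)

lemma AE_nonneg_if_set_integrals_nonneg:
  fixes g :: "'a \<Rightarrow> real"
  assumes g: "integrable M g" and nonneg: "\<And>X. X \<in> sets M \<Longrightarrow> 0 \<le> (LINT x:X|M. g x)"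
  shows "AE x in M. 0 \<le> g x"
proof -
  define X where "X = {x \<in> space M. g x < 0}"
  have X: "X \<in> sets M" unfolding X_def using borel_measurable_integrable[OF g] by measurable
  define h where "h x = indicator X x * (- g x)" for x
  have h: "integrable M h" unfolding h_def
    using integrable_mult_indicator[of X M "\<lambda>x. - g x"] X g by simp
  have h_nonneg: "AE x in M. 0 \<le> h x" by (intro AE_I2) (auto simp: h_def X_def indicator_def)
  have "integral\<^sup>L M h = - (LINT x:X|M. g x)"
    unfolding h_def set_lebesgue_integral_def by simp
  then have "integral\<^sup>L M h = 0"
    using nonneg[OF X] integral_nonneg_AE[OF h_nonneg] by simp
  then have "AE x in M. h x = 0" using integral_nonneg_eq_0_iff_AE[OF h h_nonneg] by simp
  with AE_space show ?thesis
    by eventually_elim (auto simp: h_def X_def indicator_def split: if_splits)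
qed

section \<open>Effects and their two-dimensional blocks\<close>

definition pair_vec :: "nat \<Rightarrow> nat \<Rightarrow> complex \<Rightarrow> complex \<Rightarrow> nat \<Rightarrow> complex" where
  "pair_vec m n \<alpha> \<beta> = (\<lambda>k. if k = m then \<alpha> else if k = n then \<beta> else 0)"

lemma sum_pair_vec:
  fixes f :: "nat \<Rightarrow> complex \<Rightarrow> 'b::comm_monoid_add"
  assumes "m \<noteq> n" "m < N" "n < N" and "\<And>k. f k 0 = 0"
  shows "(\<Sum>k<N. f k (pair_vec m n \<alpha> \<beta> k)) = f m \<alpha> + f n \<beta>"
proof -
  have "(\<Sum>k<N. f k (pair_vec m n \<alpha> \<beta> k)) = (\<Sum>k\<in>{m, n}. f k (pair_vec m n \<alpha> \<beta> k))"
    using assms by (intro sum.mono_neutral_right) (auto simp: pair_vec_def)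
  then show ?thesis using assms by (simp add: pair_vec_def)
qed

lemma qform_pair_vec:
  assumes "m \<noteq> n" "m < N" "n < N"
  shows "qform A N (pair_vec m n \<alpha> \<beta>) =
    cnj \<alpha> * A m m * \<alpha> + cnj \<alpha> * A m n * \<beta> + cnj \<beta> * A n m * \<alpha> + cnj \<beta> * A n n * \<beta>"
proof -
  have "(\<Sum>j<N. cnj c * A i j * pair_vec m n \<alpha> \<beta> j) = cnj c * (A i m * \<alpha> + A i n * \<beta>)" for i c
    using sum_pair_vec[OF assms, where f = "\<lambda>j x. cnj c * A i j * x"] by (simp add: algebra_simps)
  then have "qform A N (pair_vec m n \<alpha> \<beta>) =
      (\<Sum>i<N. cnj (pair_vec m n \<alpha> \<beta> i) * (A i m * \<alpha> + A i n * \<beta>))"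
    by (simp add: qform_def)
  also have "\<dots> = cnj \<alpha> * (A m m * \<alpha> + A m n * \<beta>) + cnj \<beta> * (A n m * \<alpha> + A n n * \<beta>)"
    using sum_pair_vec[OF assms, where f = "\<lambda>i x. cnj x * (A i m * \<alpha> + A i n * \<beta>)"] by simp
  finally show ?thesis by (simp add: algebra_simps)
qed

text \<open>For an effect A and m \<noteq> n, this is the quadratic form of A at the vector with entries \<alpha>
  at m and \<beta> at n.\<close>
definition block_form :: "opmat \<Rightarrow> nat \<Rightarrow> nat \<Rightarrow> complex \<Rightarrow> complex \<Rightarrow> real" where
  "block_form A m n \<alpha> \<beta> =
     (cmod \<alpha>)\<^sup>2 * Re (A m m) + (cmod \<beta>)\<^sup>2 * Re (A n n) + 2 * Re (cnj \<alpha> * \<beta> * A m n)"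

lemma block_form_add:
  "block_form (\<lambda>k l. A k l + B k l) m n \<alpha> \<beta> = block_form A m n \<alpha> \<beta> + block_form B m n \<alpha> \<beta>"
  by (simp add: block_form_def algebra_simps)

lemma effect_qform_Im_eq_0: "effect A \<Longrightarrow> Im (qform A N c) = 0"
  and effect_qform_Re_nonneg: "effect A \<Longrightarrow> 0 \<le> Re (qform A N c)"
  by (simp_all add: effect_def)

lemma effect_diag_real:
  assumes "effect A"
  shows "Im (A m m) = 0"
  using effect_qform_Im_eq_0[OF assms, of "Suc (Suc m)" "pair_vec m (Suc m) 1 0"]
  by (simp add: qform_pair_vec)

lemma effect_adjoint:
  assumes A: "effect A"
  shows "A n m = cnj (A m n)"
proof (cases "m = n")
  case True
  then show ?thesis using effect_diag_real[OF A, of m] by (simp add: complex_eq_iff)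
next
  case False
  define N where "N = Suc (max m n)"
  have mn: "m \<noteq> n" "m < N" "n < N" using False by (auto simp: N_def)
  have "Im (A m n) + Im (A n m) = 0"
    using effect_qform_Im_eq_0[OF A, of N "pair_vec m n 1 1"] effect_diag_real[OF A]
    by (simp add: qform_pair_vec[OF mn])
  moreover have "Re (A m n) - Re (A n m) = 0"
    using effect_qform_Im_eq_0[OF A, of N "pair_vec m n 1 \<i>"] effect_diag_real[OF A]
    by (simp add: qform_pair_vec[OF mn])
  ultimately show ?thesis by (simp add: complex_eq_iff)
qed

lemma effect_block_form_nonneg:
  assumes A: "effect A" and "m \<noteq> n"
  shows "0 \<le> block_form A m n \<alpha> \<beta>"
proof -
  define N where "N = Suc (max m n)"
  have mn: "m \<noteq> n" "m < N" "n < N" using assms by (auto simp: N_def)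
  have diag: "cnj \<gamma> * A k k * \<gamma> = of_real ((cmod \<gamma>)\<^sup>2 * Re (A k k))" for \<gamma> k
    using effect_diag_real[OF A, of k]
    by (simp add: complex_eq_iff power2_eq_square cmod_def algebra_simps)
  have off: "cnj \<alpha> * A m n * \<beta> + cnj \<beta> * A n m * \<alpha> = of_real (2 * Re (cnj \<alpha> * \<beta> * A m n))"
    unfolding effect_adjoint[OF A, of m n] by (simp add: complex_eq_iff algebra_simps)
  have "qform A N (pair_vec m n \<alpha> \<beta>) = of_real ((cmod \<alpha>)\<^sup>2 * Re (A m m)) + of_real ((cmod \<beta>)\<^sup>2 * Re (A n n))
      + (cnj \<alpha> * A m n * \<beta> + cnj \<beta> * A n m * \<alpha>)"
    unfolding qform_pair_vec[OF mn] diag[symmetric] by (simp add: algebra_simps)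
  also have "\<dots> = of_real (block_form A m n \<alpha> \<beta>)"
    unfolding off block_form_def by simp
  finally have "Re (qform A N (pair_vec m n \<alpha> \<beta>)) = block_form A m n \<alpha> \<beta>" by simp
  then show ?thesis using effect_qform_Re_nonneg[OF A] by metis
qed

lemma hermitian_toeplitz_idempotent_scalar:
  fixes P :: opmat
  assumes adjoint: "\<And>m n. P n m = cnj (P m n)"
    and toeplitz: "\<And>m n. P (Suc m) (Suc n) = P m n"
    and idempotent: "\<And>n. (\<lambda>k. P n k * P k n) sums P n n"
  shows "P = scalar_op (P 0 0)"
proof -
  have "P n k * P k n = of_real ((cmod (P n k))\<^sup>2)" for n k
    unfolding adjoint[of k n] by (rule complex_norm_square[symmetric])
  then have row_sums: "(\<lambda>k. (cmod (P n k))\<^sup>2) sums Re (P n n)" for n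
    using sums_Re[OF idempotent[of n]] by simp
  have diag: "P n n = P 0 0" for n
    by (induction n) (simp_all add: toeplitz)
  have shift: "P (i + k) k = P i 0" for i k
    by (induction k) (simp_all add: toeplitz)
  \<comment> \<open>Row Suc j is row j shifted by one with the entry P (Suc j) 0 prepended, and both rows have
    the same squared norm.\<close>
  have first_column: "P (Suc j) 0 = 0" for j
  proof -
    have "(\<lambda>k. (cmod (P (Suc j) (Suc k)))\<^sup>2) sums Re (P 0 0)"
      using row_sums[of j] by (simp add: toeplitz diag[of j])
    then have "(\<lambda>k. (cmod (P (Suc j) k))\<^sup>2) sums (Re (P 0 0) + (cmod (P (Suc j) 0))\<^sup>2)"
      using sums_Suc_iff[of "\<lambda>k. (cmod (P (Suc j) k))\<^sup>2"] by simp
    then have "Re (P 0 0) + (cmod (P (Suc j) 0))\<^sup>2 = Re (P 0 0)"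
      using row_sums[of "Suc j"] diag[of "Suc j"] sums_unique2 by metis
    then show ?thesis by simp
  qed
  have below_diag: "P m n = 0" if lt: "n < m" for m n
  proof -
    obtain j where "m = Suc j + n" using less_imp_Suc_add[OF lt] by auto
    then show ?thesis using shift[of "Suc j" n] first_column by simp
  qed
  show ?thesis
  proof (intro ext)
    show "P m n = scalar_op (P 0 0) m n" for m n
      using below_diag[of n m] below_diag[of m n] adjoint[of m n] diag[of n]
      by (cases m n rule: linorder_cases) (simp_all add: scalar_op_def)
  qed
qed

lemma toeplitz_projection_trivial:
  fixes P :: opmat
  assumes "\<And>m n. P n m = cnj (P m n)"
    and "\<And>m n. P (Suc m) (Suc n) = P m n"
    and idempotent: "\<And>n. (\<lambda>k. P n k * P k n) sums P n n"
  shows "\<exists>c\<in>{0, 1}. P = scalar_op c"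
proof -
  define c where "c = P 0 0"
  have P: "P = scalar_op c"
    unfolding c_def using assms by (rule hermitian_toeplitz_idempotent_scalar)
  then have "(\<lambda>k. P 0 k * P k 0) = (\<lambda>k. if k = 0 then c * c else 0)"
    by (simp add: scalar_op_def fun_eq_iff)
  then have "c * c = c"
    using idempotent[of 0] sums_single[of 0 "\<lambda>_. c * c"] sums_unique2 unfolding c_def by metis
  then have "c = 0 \<or> c = 1" by auto
  then show ?thesis using P by auto
qed

lemma form_nonneg_imp_quadratic_nonneg:
  fixes a d t :: real and b :: complex
  assumes lower: "\<And>\<beta>. 0 \<le> a + (cmod \<beta>)\<^sup>2 * d + 2 * Re (\<beta> * b)"
  shows "0 \<le> a + t\<^sup>2 * d - 2 * t * cmod b"
proof (cases "b = 0")
  case True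
  then show ?thesis using lower[of "of_real t"] by simp
next
  case False
  define u where "u = cmod b"
  define \<beta> where "\<beta> = - of_real t * cnj b / of_real u"
  have "0 < u" using False by (simp add: u_def)
  have "cnj b * b = of_real (u\<^sup>2)"
    unfolding u_def complex_norm_square by (rule mult.commute)
  then have "\<beta> * b = of_real (- t * u)"
    using \<open>0 < u\<close> by (simp add: \<beta>_def mult.assoc power2_eq_square)
  moreover have "cmod \<beta> = \<bar>t\<bar>"
    using \<open>0 < u\<close> by (simp add: \<beta>_def norm_mult norm_divide u_def)
  ultimately show ?thesis using lower[of \<beta>] by (simp add: u_def)
qed

lemma nonneg_quadratic_vanishing_at_one:
  fixes a d u :: real
  assumes quad: "\<And>t. 0 \<le> a + t\<^sup>2 * d - 2 * t * u" and sum: "a + d = 2 * u"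
  shows "a = d"
proof (cases "d = 0")
  case True
  then show ?thesis using quad[of 0] quad[of 2] sum by simp
next
  case False
  have "0 \<le> a + 4 * d - 4 * u" using quad[of 2] by simp
  then have "0 < d" using False sum quad[of 0] by simp
  then have "0 \<le> a * d - u\<^sup>2"
    using quad[of "u / d"] by (simp add: field_simps power2_eq_square)
  have "(a - d)\<^sup>2 = (a + d)\<^sup>2 - 4 * (a * d)" by (simp add: power2_eq_square algebra_simps)
  also have "\<dots> = 4 * (u\<^sup>2 - a * d)" using sum by (simp add: power_mult_distrib)
  finally have "(a - d)\<^sup>2 \<le> 0" using \<open>0 \<le> a * d - u\<^sup>2\<close> by simp
  then show ?thesis by simp
qed

lemma below_rank_one_form:
  fixes a d c :: real and b w :: complex
  assumes w: "cmod w = 1"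
    and lower: "\<And>\<beta>. 0 \<le> a + (cmod \<beta>)\<^sup>2 * d + 2 * Re (\<beta> * b)"
    and upper: "\<And>\<beta>. a + (cmod \<beta>)\<^sup>2 * d + 2 * Re (\<beta> * b) \<le> c * (1 + (cmod \<beta>)\<^sup>2 + 2 * Re (\<beta> * w))"
  shows "a = d \<and> b = a * w"
proof -
  note quad = form_nonneg_imp_quadratic_nonneg[OF lower]
  have "cnj w * w = 1"
    using w by (simp add: complex_norm_square[symmetric] mult.commute)
  \<comment> \<open>At \<beta> = - cnj w the rank-one form vanishes.\<close>
  then have "a + d \<le> 2 * Re (cnj w * b)"
    using upper[of "- cnj w"] w by simp
  moreover have "Re (cnj w * b) \<le> cmod b"
    using complex_Re_le_cmod[of "cnj w * b"] w by (simp add: norm_mult)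
  ultimately have sum: "a + d = 2 * cmod b" and Re_wb: "Re (cnj w * b) = cmod b"
    using quad[of 1] by simp_all
  then have "a = d" by (intro nonneg_quadratic_vanishing_at_one[OF quad])
  then have "Re (cnj w * b) = cmod (cnj w * b)" and "cmod b = a"
    using Re_wb sum w by (simp_all add: norm_mult)
  then have "Im (cnj w * b) = 0"
    using norm_eq_Re_iff[of "cnj w * b"] complex_nonneg_Reals_iff by auto
  then have "cnj w * b = of_real a"
    using Re_wb \<open>cmod b = a\<close> by (simp add: complex_eq_iff)
  moreover have "b = w * (cnj w * b)"
    using \<open>cnj w * w = 1\<close> by (simp add: mult.assoc[symmetric] mult.commute[of w])
  ultimately show ?thesis using \<open>a = d\<close> by simp
qed

section \<open>The canonical phase observable\<close>

definition phase_factor :: "nat \<Rightarrow> nat \<Rightarrow> real \<Rightarrow> complex" where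
  "phase_factor m n \<theta> = exp (\<i> * of_int (int m - int n) * complex_of_real \<theta>)"

lemma norm_phase_factor [simp]: "cmod (phase_factor m n \<theta>) = 1"
proof -
  have "phase_factor m n \<theta> = exp (\<i> * complex_of_real (real_of_int (int m - int n) * \<theta>))"
    unfolding phase_factor_def by (simp add: mult_ac)
  then show ?thesis using norm_exp_i_times by simp
qed

lemma phase_factor_diag [simp]: "phase_factor m m = (\<lambda>_. 1)"
  by (simp add: phase_factor_def fun_eq_iff)

lemma phase_factor_Suc_Suc [simp]: "phase_factor (Suc m) (Suc n) = phase_factor m n"
  by (simp add: phase_factor_def fun_eq_iff)

lemma continuous_on_phase_factor [continuous_intros]: "continuous_on A (phase_factor m n)"
  unfolding phase_factor_def by (intro continuous_intros)

lemma set_integrable_continuous_subset: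
  fixes f :: "real \<Rightarrow> 'a::{banach, second_countable_topology}"
  assumes "continuous_on {a..b} f" "T \<in> sets borel" "T \<subseteq> {a..b}"
  shows "set_integrable lborel T f"
  using set_integrable_subset[OF borel_integrable_atLeastAtMost'[OF assms(1)]] assms(2,3) by simp

definition phase_form_density :: "nat \<Rightarrow> nat \<Rightarrow> complex \<Rightarrow> real \<Rightarrow> real" where
  "phase_form_density m n \<beta> \<theta> =
     indicator {0..<2*pi} \<theta> * ((1 + (cmod \<beta>)\<^sup>2 + 2 * Re (\<beta> * phase_factor m n \<theta>)) / (2*pi))"

lemma integrable_phase_form_density: "integrable lborel (phase_form_density m n \<beta>)"
proof -
  have "set_integrable lborel {0..<2*pi}
      (\<lambda>\<theta>. (1 + (cmod \<beta>)\<^sup>2 + 2 * Re (\<beta> * phase_factor m n \<theta>)) / (2*pi))"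
    by (intro set_integrable_continuous_subset[where a = 0 and b = "2*pi"] continuous_intros) auto
  then show ?thesis by (simp add: set_integrable_def phase_form_density_def[abs_def])
qed

lemma block_form_E_can:
  assumes X: "X \<in> sets borel"
  shows "block_form (E_can (X \<inter> {0..<2*pi})) m n 1 \<beta> = (LINT \<theta>:X|lborel. phase_form_density m n \<beta> \<theta>)"
proof -
  define T where "T = X \<inter> {0..<2*pi}"
  have T: "T \<in> sets borel" "T \<subseteq> {0..2*pi}" using X by (auto simp: T_def)
  have E_can_T: "E_can T k l = of_real (1/(2*pi)) * (CLINT \<theta>:T|lborel. phase_factor k l \<theta>)" for k l
    by (simp add: E_can_def phase_factor_def[abs_def])
  have int: "set_integrable lborel T (phase_factor k l)" "set_integrable lborel T (\<lambda>_. c::complex)" for k l c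
    by (intro set_integrable_continuous_subset[OF _ T] continuous_intros)+
  have const: "(CLINT \<theta>:T|lborel. 1) * c = (CLINT \<theta>:T|lborel. c)" for c :: complex
    using set_integral_mult_left[of lborel T "\<lambda>_. 1" c] by simp
  define g where "g \<theta> = 1 + of_real ((cmod \<beta>)\<^sup>2) + 2 * \<beta> * phase_factor m n \<theta>" for \<theta>
  have "set_integrable lborel T g"
    unfolding g_def by (intro set_integral_add set_integrable_mult_right int)
  then have Re_g: "Re (CLINT \<theta>:T|lborel. g \<theta>) = (LINT \<theta>:T|lborel. Re (g \<theta>))"
    using integral_Re[of lborel "\<lambda>\<theta>. indicator T \<theta> *\<^sub>R g \<theta>"]
    by (simp add: set_lebesgue_integral_def set_integrable_def)
  have "block_form (E_can T) m n 1 \<beta>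
      = Re (E_can T m m + of_real ((cmod \<beta>)\<^sup>2) * E_can T n n + 2 * \<beta> * E_can T m n)"
    by (simp add: block_form_def)
  also have "E_can T m m + of_real ((cmod \<beta>)\<^sup>2) * E_can T n n + 2 * \<beta> * E_can T m n
      = of_real (1/(2*pi)) * (CLINT \<theta>:T|lborel. g \<theta>)"
    unfolding E_can_T g_def
    by (simp add: set_integral_add set_integrable_mult_right int set_integral_mult_right const algebra_simps)
  also have "Re \<dots> = (1/(2*pi)) * (LINT \<theta>:T|lborel. Re (g \<theta>))"
    using Re_g by simp
  also have "\<dots> = (LINT \<theta>:X|lborel. phase_form_density m n \<beta> \<theta>)"
    unfolding set_lebesgue_integral_def T_def phase_form_density_def g_def
    by (simp add: indicator_inter_arith integral_mult_right_zero[symmetric] mult_ac)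
  finally show ?thesis by (simp add: T_def)
qed

lemma observable_empty:
  assumes "observable M G"
  shows "G {} = (\<lambda>k l. 0)"
proof (intro ext)
  fix k l
  have "(\<lambda>i::nat. G {} k l) sums G {} k l"
    using assms unfolding observable_def
    by (auto dest!: spec[of _ "\<lambda>_. {}"] simp: disjoint_family_on_def)
  then show "G {} k l = 0" by (rule sums_const_imp_zero)
qed

lemma observable_Un:
  assumes G: "observable M G" and "A \<in> sets M" "B \<in> sets M" "A \<inter> B = {}"
  shows "G (A \<union> B) = (\<lambda>k l. G A k l + G B k l)"
proof (intro ext)
  fix k l
  define C where "C i = (if i = (0::nat) then A else if i = 1 then B else {})" for i
  have "range C \<subseteq> sets M" "disjoint_family C"
    using assms by (auto simp: C_def disjoint_family_on_def)
  then have "(\<lambda>i. G (C i) k l) sums G (\<Union>i. C i) k l"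
    using G unfolding observable_def by blast
  moreover have "(\<Union>i. C i) = A \<union> B"
    by (auto simp: C_def split: if_splits)
  moreover have "(\<lambda>i. G (C i) k l) sums (\<Sum>i\<in>{0,1}. G (C i) k l)"
    by (rule sums_finite) (auto simp: C_def observable_empty[OF G])
  ultimately show "G (A \<union> B) k l = G A k l + G B k l"
    by (simp add: C_def sums_iff)
qed

section \<open>Effect-valued measures below the canonical phase\<close>

locale phase_dominated =
  fixes \<Phi> :: "real set \<Rightarrow> opmat"
  assumes effect_values: "X \<in> sets borel \<Longrightarrow> effect (\<Phi> X)"
    and countably_additive_entries: "range A \<subseteq> sets borel \<Longrightarrow> disjoint_family A \<Longrightarrow>
      (\<lambda>i. \<Phi> (A i) k l) sums \<Phi> (\<Union>i. A i) k l"
    and dominated: "m \<noteq> n \<Longrightarrow> X \<in> sets borel \<Longrightarrow>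
      block_form (\<Phi> X) m n 1 \<beta> \<le> (LINT \<theta>:X|lborel. phase_form_density m n \<beta> \<theta>)"
begin

lemma block_form_sums:
  assumes "range A \<subseteq> sets borel" "disjoint_family A"
  shows "(\<lambda>i. block_form (\<Phi> (A i)) m n \<alpha> \<beta>) sums block_form (\<Phi> (\<Union>i. A i)) m n \<alpha> \<beta>"
  unfolding block_form_def
  using countably_additive_entries[OF assms]
  by (intro sums_add sums_mult sums_Re sums_mult[where c = "cnj \<alpha> * \<beta>"])

lemma block_form_null_set:
  assumes "m \<noteq> n" "X \<in> null_sets lborel"
  shows "block_form (\<Phi> X) m n 1 \<beta> = 0"
proof -
  have X: "X \<in> sets borel" using assms(2) by auto
  have "AE \<theta> in lborel. indicator X \<theta> *\<^sub>R phase_form_density m n \<beta> \<theta> = 0"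
    using AE_not_in[OF assms(2)] by eventually_elim simp
  then have "(LINT \<theta>:X|lborel. phase_form_density m n \<beta> \<theta>) = 0"
    unfolding set_lebesgue_integral_def by (rule integral_eq_zero_AE)
  then show ?thesis
    using dominated[OF assms(1) X, of \<beta>] effect_block_form_nonneg[OF effect_values[OF X] assms(1), of 1 \<beta>]
    by simp
qed

definition form_density :: "nat \<Rightarrow> nat \<Rightarrow> complex \<Rightarrow> real \<Rightarrow> real" where
  "form_density m n \<beta> = (SOME g. integrable lborel g \<and>
     (\<forall>X\<in>sets borel. (LINT \<theta>:X|lborel. g \<theta>) = block_form (\<Phi> X) m n 1 \<beta>))"

lemma form_density:
  assumes "m \<noteq> n"
  shows "integrable lborel (form_density m n \<beta>)"
    and "X \<in> sets borel \<Longrightarrow> (LINT \<theta>:X|lborel. form_density m n \<beta> \<theta>) = block_form (\<Phi> X) m n 1 \<beta>"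
proof -
  obtain g where g: "integrable lborel g" "\<And>X. X \<in> sets borel \<Longrightarrow> (LINT \<theta>:X|lborel. g \<theta>) = block_form (\<Phi> X) m n 1 \<beta>"
    by (rule countably_additive_has_density[OF sigma_finite_lborel, of "\<lambda>X. block_form (\<Phi> X) m n 1 \<beta>"])
      (use assms effect_values effect_block_form_nonneg block_form_sums block_form_null_set in auto)
  have "integrable lborel (form_density m n \<beta>) \<and>
      (\<forall>X\<in>sets borel. (LINT \<theta>:X|lborel. form_density m n \<beta> \<theta>) = block_form (\<Phi> X) m n 1 \<beta>)"
    unfolding form_density_def by (rule someI[where x = g]) (use g in auto)
  then show "integrable lborel (form_density m n \<beta>)"
    and "X \<in> sets borel \<Longrightarrow> (LINT \<theta>:X|lborel. form_density m n \<beta> \<theta>) = block_form (\<Phi> X) m n 1 \<beta>"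
    by auto
qed

text \<open>The partner index Suc m is a dummy: at \<beta> = 0 the block form only sees the entry at (m, m).\<close>
definition diag_density :: "nat \<Rightarrow> real \<Rightarrow> real" where
  "diag_density m = form_density m (Suc m) 0"

text \<open>Polarization: block forms at \<beta> = 1 and \<beta> = \<i> recover the real and imaginary part of an entry.\<close>
definition offdiag_density :: "nat \<Rightarrow> nat \<Rightarrow> real \<Rightarrow> complex" where
  "offdiag_density m n \<theta> =
     Complex ((form_density m n 1 \<theta> - diag_density m \<theta> - diag_density n \<theta>) / 2)
             ((diag_density m \<theta> + diag_density n \<theta> - form_density m n \<i> \<theta>) / 2)"

definition block_density :: "nat \<Rightarrow> nat \<Rightarrow> complex \<Rightarrow> real \<Rightarrow> real" where
  "block_density m n \<beta> \<theta> =
     diag_density m \<theta> + (cmod \<beta>)\<^sup>2 * diag_density n \<theta> + 2 * Re (\<beta> * offdiag_density m n \<theta>)"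

lemma diag_density:
  shows "integrable lborel (diag_density m)"
    and "X \<in> sets borel \<Longrightarrow> (LINT \<theta>:X|lborel. diag_density m \<theta>) = Re (\<Phi> X m m)"
  using form_density[where m = m and n = "Suc m" and \<beta> = 0]
  by (simp_all add: diag_density_def block_form_def)

lemma offdiag_density:
  assumes "m \<noteq> n"
  shows "integrable lborel (\<lambda>\<theta>. Re (offdiag_density m n \<theta>))"
    and "integrable lborel (\<lambda>\<theta>. Im (offdiag_density m n \<theta>))"
    and "X \<in> sets borel \<Longrightarrow> (LINT \<theta>:X|lborel. Re (offdiag_density m n \<theta>)) = Re (\<Phi> X m n)"
    and "X \<in> sets borel \<Longrightarrow> (LINT \<theta>:X|lborel. Im (offdiag_density m n \<theta>)) = Im (\<Phi> X m n)"
proof -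
  note f = form_density[OF assms] and d = diag_density
  show "integrable lborel (\<lambda>\<theta>. Re (offdiag_density m n \<theta>))"
    "integrable lborel (\<lambda>\<theta>. Im (offdiag_density m n \<theta>))"
    using f d by (auto simp: offdiag_density_def)
  assume X: "X \<in> sets borel"
  show "(LINT \<theta>:X|lborel. Re (offdiag_density m n \<theta>)) = Re (\<Phi> X m n)"
    "(LINT \<theta>:X|lborel. Im (offdiag_density m n \<theta>)) = Im (\<Phi> X m n)"
    using X f d by (simp_all add: offdiag_density_def block_form_def set_integral_diff set_integral_add
        integrable_imp_set_integrable set_integral_divide_zero[symmetric])
qed

lemma block_density:
  assumes "m \<noteq> n"
  shows "integrable lborel (block_density m n \<beta>)"
    and "X \<in> sets borel \<Longrightarrow> (LINT \<theta>:X|lborel. block_density m n \<beta> \<theta>) = block_form (\<Phi> X) m n 1 \<beta>"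
proof -
  note od = offdiag_density[OF assms] and d = diag_density
  have "block_density m n \<beta> = (\<lambda>\<theta>. diag_density m \<theta> + (cmod \<beta>)\<^sup>2 * diag_density n \<theta>
      + 2 * (Re \<beta> * Re (offdiag_density m n \<theta>) - Im \<beta> * Im (offdiag_density m n \<theta>)))"
    by (simp add: block_density_def fun_eq_iff)
  then show "integrable lborel (block_density m n \<beta>)"
    using od d by simp
  assume X: "X \<in> sets borel"
  show "(LINT \<theta>:X|lborel. block_density m n \<beta> \<theta>) = block_form (\<Phi> X) m n 1 \<beta>"
    using X od d by (simp add: block_density_def block_form_def set_integral_diff set_integral_add
        integrable_imp_set_integrable)
qed

lemma AE_block_density_bounds:
  assumes "m \<noteq> n"
  shows "AE \<theta> in lborel. 0 \<le> block_density m n \<beta> \<theta> \<and> block_density m n \<beta> \<theta> \<le> phase_form_density m n \<beta> \<theta>"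
proof -
  note bd = block_density[OF assms, where \<beta> = \<beta>]
  have "AE \<theta> in lborel. 0 \<le> block_density m n \<beta> \<theta>"
    using bd effect_block_form_nonneg[OF effect_values assms] by (intro AE_nonneg_if_set_integrals_nonneg) simp_all
  moreover have "AE \<theta> in lborel. 0 \<le> phase_form_density m n \<beta> \<theta> - block_density m n \<beta> \<theta>"
  proof (rule AE_nonneg_if_set_integrals_nonneg)
    show "integrable lborel (\<lambda>\<theta>. phase_form_density m n \<beta> \<theta> - block_density m n \<beta> \<theta>)"
      using integrable_phase_form_density bd by simp
    fix X :: "real set" assume "X \<in> sets lborel"
    then show "0 \<le> (LINT \<theta>:X|lborel. phase_form_density m n \<beta> \<theta> - block_density m n \<beta> \<theta>)"
      using dominated[OF assms, of X \<beta>] bd integrable_phase_form_density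
      by (simp add: set_integral_diff integrable_imp_set_integrable)
  qed
  ultimately show ?thesis by eventually_elim simp
qed

lemma AE_rank_one_densities:
  assumes "m \<noteq> n"
  shows "AE \<theta> in lborel. \<theta> \<in> {0..<2*pi} \<longrightarrow>
    diag_density m \<theta> = diag_density n \<theta> \<and> offdiag_density m n \<theta> = diag_density m \<theta> * phase_factor m n \<theta>"
proof -
  define bounded where "bounded \<beta> \<theta> \<longleftrightarrow>
    0 \<le> block_density m n \<beta> \<theta> \<and> block_density m n \<beta> \<theta> \<le> phase_form_density m n \<beta> \<theta>" for \<beta> \<theta>
  obtain D :: "complex set" where "countable D" and dense: "\<And>U. open U \<Longrightarrow> U \<noteq> {} \<Longrightarrow> \<exists>d\<in>D. d \<in> U"
    using countable_dense_setE by blast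
  then have "AE \<theta> in lborel. \<forall>\<beta>\<in>D. bounded \<beta> \<theta>"
    using AE_block_density_bounds[OF assms] by (subst AE_ball_countable) (auto simp: bounded_def)
  then show ?thesis
  proof eventually_elim
    case (elim \<theta>)
    \<comment> \<open>The bounds hold on a closed set of \<beta> containing the dense set D.\<close>
    have "closed {\<beta>. bounded \<beta> \<theta>}"
      unfolding bounded_def block_density_def phase_form_density_def
      by (intro closed_Collect_conj closed_Collect_le continuous_intros) auto
    then have bounded: "bounded \<beta> \<theta>" for \<beta>
      using dense[of "- {\<beta>. bounded \<beta> \<theta>}"] elim by auto
    show ?case
    proof
      assume "\<theta> \<in> {0..<2*pi}"
      then have "bounded \<beta> \<theta> \<longleftrightarrow>
          0 \<le> diag_density m \<theta> + (cmod \<beta>)\<^sup>2 * diag_density n \<theta> + 2 * Re (\<beta> * offdiag_density m n \<theta>) \<and>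
          diag_density m \<theta> + (cmod \<beta>)\<^sup>2 * diag_density n \<theta> + 2 * Re (\<beta> * offdiag_density m n \<theta>)
            \<le> 1 / (2*pi) * (1 + (cmod \<beta>)\<^sup>2 + 2 * Re (\<beta> * phase_factor m n \<theta>))" for \<beta>
        by (simp add: bounded_def block_density_def phase_form_density_def)
      then show "diag_density m \<theta> = diag_density n \<theta> \<and>
          offdiag_density m n \<theta> = diag_density m \<theta> * phase_factor m n \<theta>"
        using bounded by (intro below_rank_one_form[OF norm_phase_factor]) blast+
    qed
  qed
qed

lemma AE_diag_density_eq:
  "AE \<theta> in lborel. \<theta> \<in> {0..<2*pi} \<longrightarrow> diag_density m \<theta> = diag_density 0 \<theta>"
proof (induction m)
  case (Suc m)
  moreover have "AE \<theta> in lborel. \<theta> \<in> {0..<2*pi} \<longrightarrow> diag_density m \<theta> = diag_density (Suc m) \<theta>"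
    using AE_rank_one_densities[of m "Suc m"] by (auto elim: eventually_mono)
  ultimately show ?case by eventually_elim auto
qed simp

lemma AE_offdiag_density_eq:
  assumes "m \<noteq> n"
  shows "AE \<theta> in lborel. \<theta> \<in> {0..<2*pi} \<longrightarrow>
    offdiag_density m n \<theta> = diag_density 0 \<theta> * phase_factor m n \<theta>"
  using AE_rank_one_densities[OF assms] AE_diag_density_eq[of m] by eventually_elim auto

lemma entry_representation:
  assumes X: "X \<in> sets borel" "X \<subseteq> {0..<2*pi}"
  shows "Re (\<Phi> X m n) = (LINT \<theta>:X|lborel. diag_density 0 \<theta> * Re (phase_factor m n \<theta>))"
    and "Im (\<Phi> X m n) = (LINT \<theta>:X|lborel. diag_density 0 \<theta> * Im (phase_factor m n \<theta>))"
proof -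
  have meas: "diag_density k \<in> borel_measurable borel" "phase_factor m n \<in> borel_measurable borel" for k
    using borel_measurable_integrable[OF diag_density(1)]
    by (auto intro: borel_measurable_continuous_onI continuous_on_phase_factor)
  have AE_X: "AE \<theta> \<in> X in lborel. P \<theta>" if "AE \<theta> in lborel. \<theta> \<in> {0..<2*pi} \<longrightarrow> P \<theta>" for P
    using that by eventually_elim (use X(2) in auto)
  show "Re (\<Phi> X m n) = (LINT \<theta>:X|lborel. diag_density 0 \<theta> * Re (phase_factor m n \<theta>))"
  proof (cases "m = n")
    case True
    have "Re (\<Phi> X m m) = (LINT \<theta>:X|lborel. diag_density m \<theta>)" using diag_density(2) X by simp
    also have "\<dots> = (LINT \<theta>:X|lborel. diag_density 0 \<theta>)"
      using X meas AE_X[OF AE_diag_density_eq] by (intro set_lebesgue_integral_cong_AE) auto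
    finally show ?thesis using True by simp
  next
    case False
    have "Re (\<Phi> X m n) = (LINT \<theta>:X|lborel. Re (offdiag_density m n \<theta>))"
      using offdiag_density(3)[OF False] X by simp
    also have "\<dots> = (LINT \<theta>:X|lborel. diag_density 0 \<theta> * Re (phase_factor m n \<theta>))"
      using X meas borel_measurable_integrable[OF offdiag_density(1)[OF False]] AE_X[OF AE_offdiag_density_eq[OF False]]
      by (intro set_lebesgue_integral_cong_AE) (auto elim!: eventually_mono)
    finally show ?thesis .
  qed
  show "Im (\<Phi> X m n) = (LINT \<theta>:X|lborel. diag_density 0 \<theta> * Im (phase_factor m n \<theta>))"
  proof (cases "m = n")
    case True
    then show ?thesis using effect_diag_real[OF effect_values[OF X(1)]] by simp
  next
    case False
    have "Im (\<Phi> X m n) = (LINT \<theta>:X|lborel. Im (offdiag_density m n \<theta>))"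
      using offdiag_density(4)[OF False] X by simp
    also have "\<dots> = (LINT \<theta>:X|lborel. diag_density 0 \<theta> * Im (phase_factor m n \<theta>))"
      using X meas borel_measurable_integrable[OF offdiag_density(2)[OF False]] AE_X[OF AE_offdiag_density_eq[OF False]]
      by (intro set_lebesgue_integral_cong_AE) (auto elim!: eventually_mono)
    finally show ?thesis .
  qed
qed

lemma toeplitz: "\<Phi> {0..<2*pi} (Suc m) (Suc n) = \<Phi> {0..<2*pi} m n"
  using entry_representation[of "{0..<2*pi}"] by (simp add: complex_eq_iff)

end

lemma Int_Times_in_sets_restrict_space:
  fixes S X :: "'a::topological_space set" and Z :: "'b::topological_space set"
  assumes "S \<in> sets borel" "X \<in> sets borel" "Z \<in> sets borel"
  shows "(X \<inter> S) \<times> Z \<in> sets (restrict_space borel (S \<times> UNIV))"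
  using assms by (subst sets_restrict_space_iff) (auto intro: borel_Times)

lemma phase_dominated_slice:
  fixes G :: "(real \<times> 'a::topological_space) set \<Rightarrow> opmat"
  assumes G: "observable (restrict_space borel ({0..<2*pi} \<times> (UNIV :: 'a set))) G"
    and marginal: "\<And>X. X \<in> sets (restrict_space borel {0..<2*pi}) \<Longrightarrow> G (X \<times> UNIV) = E_can X"
    and Y: "Y \<in> sets borel"
  shows "phase_dominated (\<lambda>X. G ((X \<inter> {0..<2*pi}) \<times> Y))"
proof -
  note sets_G = Int_Times_in_sets_restrict_space[where S = "{0..<2*pi}" and 'b = 'a, simplified]
  have effect_slice: "effect (G ((X \<inter> {0..<2*pi}) \<times> Z))" if "X \<in> sets borel" "Z \<in> sets borel" for X Z
    using G sets_G[OF that] by (simp add: observable_def)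
  show ?thesis
  proof
    show "effect (G ((X \<inter> {0..<2*pi}) \<times> Y))" if "X \<in> sets borel" for X
      using effect_slice[OF that Y] .
  next
    fix A :: "nat \<Rightarrow> real set" and k l
    assume A: "range A \<subseteq> sets borel" "disjoint_family A"
    define B where "B i = (A i \<inter> {0..<2*pi}) \<times> Y" for i
    have "range B \<subseteq> sets (restrict_space borel ({0..<2*pi} \<times> (UNIV :: 'a set)))" "disjoint_family B"
      using A sets_G Y by (auto simp: B_def disjoint_family_on_def)
    then have "(\<lambda>i. G (B i) k l) sums G (\<Union>i. B i) k l"
      using G by (simp add: observable_def)
    moreover have "(\<Union>i. B i) = ((\<Union>i. A i) \<inter> {0..<2*pi}) \<times> Y"
      by (auto simp: B_def)
    ultimately show "(\<lambda>i. G ((A i \<inter> {0..<2*pi}) \<times> Y) k l) sums G (((\<Union>i. A i) \<inter> {0..<2*pi}) \<times> Y) k l"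
      by (simp add: B_def)
  next
    fix m n :: nat and X :: "real set" and \<beta> :: complex
    assume mn: "m \<noteq> n" and X: "X \<in> sets borel"
    \<comment> \<open>The slices over Y and over its complement add up to the marginal E_can.\<close>
    have "E_can (X \<inter> {0..<2*pi}) = G ((X \<inter> {0..<2*pi}) \<times> Y \<union> (X \<inter> {0..<2*pi}) \<times> - Y)"
      using X by (simp add: marginal[symmetric] sets_restrict_space_iff flip: Sigma_Un_distrib2)
    also have "\<dots> = (\<lambda>k l. G ((X \<inter> {0..<2*pi}) \<times> Y) k l + G ((X \<inter> {0..<2*pi}) \<times> - Y) k l)"
      using X Y by (intro observable_Un[OF G] sets_G) auto
    finally have "block_form (G ((X \<inter> {0..<2*pi}) \<times> Y)) m n 1 \<beta>
        + block_form (G ((X \<inter> {0..<2*pi}) \<times> - Y)) m n 1 \<beta>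
        = (LINT \<theta>:X|lborel. phase_form_density m n \<beta> \<theta>)"
      using block_form_E_can[OF X] by (simp add: block_form_add)
    moreover have "0 \<le> block_form (G ((X \<inter> {0..<2*pi}) \<times> - Y)) m n 1 \<beta>"
      using effect_slice[OF X borel_comp[OF Y]] mn by (rule effect_block_form_nonneg)
    ultimately show "block_form (G ((X \<inter> {0..<2*pi}) \<times> Y)) m n 1 \<beta> \<le> (LINT \<theta>:X|lborel. phase_form_density m n \<beta> \<theta>)"
      by simp
  qed
qed

theorem mainTheorem2:
  fixes F :: "'a::topological_space set \<Rightarrow> opmat"
  assumes "sharp borel F"
    and "jointly_measurable {0..<2*pi} E_can (UNIV :: 'a set) F"
  shows "\<forall>X\<in>sets borel. \<exists>c\<in>{0, 1}. F X = scalar_op c"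
proof
  fix Y :: "'a set" assume Y: "Y \<in> sets borel"
  obtain G where G: "observable (restrict_space borel ({0..<2*pi} \<times> (UNIV :: 'a set))) G"
    and marginal_phase: "\<forall>X\<in>sets (restrict_space borel {0..<2*pi}). G (X \<times> UNIV) = E_can X"
    and marginal_F: "\<forall>Y\<in>sets (restrict_space borel (UNIV :: 'a set)). G ({0..<2*pi} \<times> Y) = F Y"
    using assms(2) unfolding jointly_measurable_def by blast
  interpret phase_dominated "\<lambda>X. G ((X \<inter> {0..<2*pi}) \<times> Y)"
    using G marginal_phase Y by (intro phase_dominated_slice) auto
  have F_Y: "F Y = G ({0..<2*pi} \<times> Y)" using marginal_F Y by simp
  have "effect (F Y)" and "\<And>m n. (\<lambda>k. F Y m k * F Y k n) sums F Y m n"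
    using assms(1) Y unfolding sharp_def observable_def by auto
  then show "\<exists>c\<in>{0, 1}. F Y = scalar_op c"
    using toeplitz by (intro toeplitz_projection_trivial effect_adjoint) (simp_all add: F_Y)
qed

end
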